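(* Let $k\ge2$ be an integer and for $p>1$ define \[\psi_k(x)=\sin^p(\pi x)\Big(\frac1{(k-x)^p}+\frac1{(k+x-1)^p}\Big),\qquad x\in[1/2,1].\] Then: (i) for all $p>1$, the points $x=1/2$ and $x=1$ are abscissae of extrema of $\psi_k$; (ii) if $p>\pi^2(k-1/2)^2-1$, then $\psi_k$ attains an extremum at some point $x_k^*\in(1/2,A_k)$, where $A_k\in(1/2,1)$ is the unique solution in $(1/2,1)$ of the equation $\cot(\pi x)=-\frac{1}{\pi(k-x)}$; (iii) each $x_k^*\in(1/2,A_k)$ is the abscissa of an extremum of $\psi_k$ for exactly one value $p=\widetilde p$, namely \[\widetilde p=\frac{\ln\dfrac{1-\pi\cot(\pi x_k^* )(k+x_k^*-1)}{\pi\cot(\pi x_k^* )(k+x_k^*-1)-1+\frac{2k-1}{k-x_k^*}}}{\ln(k+x_k^*-1)-\ln(k-x_k^* )},\] and this value satisfies $\widetilde p>1$. *)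

theory Defs
  imports "HOL-Analysis.Analysis"
begin

definition psi :: "nat \<Rightarrow> real \<Rightarrow> real \<Rightarrow> real" where
  "psi k p x = (sin (pi * x)) powr p *
      (1 / (real k - x) powr p + 1 / (real k + x - 1) powr p)"

definition is_extremum_on :: "real set \<Rightarrow> (real \<Rightarrow> real) \<Rightarrow> real \<Rightarrow> bool" where
  "is_extremum_on S f x \<longleftrightarrow> x \<in> S \<and> (\<exists>e>0.
      (\<forall>y\<in>S. \<bar>y - x\<bar> < e \<longrightarrow> f y \<le> f x) \<or>
      (\<forall>y\<in>S. \<bar>y - x\<bar> < e \<longrightarrow> f y \<ge> f x))"

definition A_k :: "nat \<Rightarrow> real" where
  "A_k k = (THE A. 1/2 < A \<and> A < 1 \<and> cot (pi * A) = - 1 / (pi * (real k - A)))"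

definition p_tilde :: "nat \<Rightarrow> real \<Rightarrow> real" where
  "p_tilde k x =
     ln ((1 - pi * cot (pi * x) * (real k + x - 1)) /
         (pi * cot (pi * x) * (real k + x - 1) - 1 + (2 * real k - 1) / (real k - x)))
     / (ln (real k + x - 1) - ln (real k - x))"

end

theory Submission
  imports Defs
begin

text \<open>Write \<open>t = -\<pi> cot (\<pi> x)\<close>, \<open>\<alpha> = 1/(k-x)\<close> and \<open>\<beta> = 1/(k+x-1)\<close>. On \<open>(1/2, A_k)\<close> both
\<open>\<alpha> - t\<close> and \<open>t + \<beta>\<close> are positive, and comparing the logarithms of the two terms of
\<open>\<psi>'\<close> shows that \<open>\<psi>'(x)\<close> has the sign of \<open>p - p_tilde(x)\<close>. The function \<open>p_tilde\<close> is the
quotient of \<open>ln ((t+\<beta>)/(\<alpha>-t))\<close> and \<open>ln (\<alpha>/\<beta>)\<close>; both vanish at \<open>1/2\<close>, and since \<open>t\<close>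
solves the Riccati equation \<open>t' = \<pi>\<^sup>2 + t\<^sup>2\<close>, the quotient of their derivatives is
\<open>\<pi>\<^sup>2/K - 1\<close> with \<open>K = (t+\<beta>)(\<alpha>-t)\<close> decreasing. By the monotone form of l'Hospital's
rule \<open>p_tilde\<close> is therefore strictly increasing, with \<open>\<pi>\<^sup>2(k-1/2)\<^sup>2 - 1 < p_tilde < \<pi>\<^sup>2/K - 1\<close>.
So \<open>\<psi>\<close> is monotone to the right of \<open>1/2\<close>; where \<open>p = p_tilde(x)\<close> the derivative changes sign
from \<open>+\<close> to \<open>-\<close>; and for \<open>p > \<pi>\<^sup>2(k-1/2)\<^sup>2 - 1\<close> the function increases near \<open>1/2\<close>
but decreases at \<open>A_k\<close> (where \<open>\<alpha> = t\<close>), so its maximum on \<open>[1/2, A_k]\<close> is interior.\<close>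

lemma deriv_pos_imp_less:
  fixes f f' :: "real \<Rightarrow> real"
  assumes "a < b" "\<And>x. a \<le> x \<Longrightarrow> x \<le> b \<Longrightarrow> DERIV f x :> f' x"
    and "\<And>x. a < x \<Longrightarrow> x < b \<Longrightarrow> 0 < f' x"
  shows "f a < f b"
proof (rule DERIV_pos_imp_increasing_open[OF assms(1)])
  show "\<exists>y. DERIV f x :> y \<and> 0 < y" if "a < x" "x < b" for x
    using assms(2)[of x] assms(3)[OF that] that by auto
  show "continuous_on {a..b} f"
    using assms(2) by (intro DERIV_atLeastAtMost_imp_continuous_on) blast
qed

lemma deriv_neg_imp_greater:
  fixes f f' :: "real \<Rightarrow> real"
  assumes "a < b" "\<And>x. a \<le> x \<Longrightarrow> x \<le> b \<Longrightarrow> DERIV f x :> f' x"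
    and "\<And>x. a < x \<Longrightarrow> x < b \<Longrightarrow> f' x < 0"
  shows "f b < f a"
proof (rule DERIV_neg_imp_decreasing_open[OF assms(1)])
  show "\<exists>y. DERIV f x :> y \<and> y < 0" if "a < x" "x < b" for x
    using assms(2)[of x] assms(3)[OF that] that by auto
  show "continuous_on {a..b} f"
    using assms(2) by (intro DERIV_atLeastAtMost_imp_continuous_on) blast
qed

lemma DERIV_quotient_log:
  fixes f h :: "real \<Rightarrow> real"
  assumes "DERIV f x :> f'" "DERIV h x :> h'" "f x \<noteq> 0" "h x \<noteq> 0"
  shows "DERIV (\<lambda>x. f x / h x) x :> f x / h x * (f' / f x - h' / h x)"
  using assms by (intro DERIV_cong[OF DERIV_divide]) (auto simp: field_simps)

lemma DERIV_powr_log: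
  fixes g :: "real \<Rightarrow> real"
  assumes "DERIV g x :> g x * l" "0 < g x"
  shows "DERIV (\<lambda>x. g x powr p) x :> p * l * g x powr p"
  using assms by (intro DERIV_cong[OF DERIV_powr[OF _ _ DERIV_const]]) auto

lemma monotone_lhospital:
  fixes f g g' r :: "real \<Rightarrow> real"
  assumes zero: "f a = 0" "g a = 0"
    and g': "\<And>x. a \<le> x \<Longrightarrow> x < b \<Longrightarrow> DERIV g x :> g' x"
    and g'_pos: "\<And>x. a < x \<Longrightarrow> x < b \<Longrightarrow> 0 < g' x"
    and f': "\<And>x. a \<le> x \<Longrightarrow> x < b \<Longrightarrow> DERIV f x :> g' x * r x"
    and r_mono: "\<And>x y. a \<le> x \<Longrightarrow> x < y \<Longrightarrow> y < b \<Longrightarrow> r x < r y"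
  shows monotone_lhospital_bounds:
      "\<And>x. a < x \<Longrightarrow> x < b \<Longrightarrow> r a < f x / g x \<and> f x / g x < r x"
    and monotone_lhospital_mono:
      "\<And>x y. a < x \<Longrightarrow> x < y \<Longrightarrow> y < b \<Longrightarrow> f x / g x < f y / g y"
proof -
  have g_pos: "0 < g x" if "a < x" "x < b" for x
    using deriv_pos_imp_less[of a x g g'] g' g'_pos that zero by simp
  have ratio: "\<exists>c. a < c \<and> c < x \<and> f x / g x = r c" if x: "a < x" "x < b" for x
  proof -
    have "\<exists>c. a < c \<and> c < x \<and> (f x - f a) * g' c = (g x - g a) * (g' c * r c)"
    proof (rule GMVT'[OF x(1)])
      fix z assume "a \<le> z" "z \<le> x"
      then show "isCont f z" "isCont g z"
        using f'[of z] g'[of z] x by (auto intro: DERIV_isCont)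
    next
      fix z assume "a < z" "z < x"
      then show "DERIV g z :> g' z" "DERIV f z :> g' z * r z"
        using f'[of z] g'[of z] x by auto
    qed
    then obtain c where c: "a < c" "c < x" "f x * g' c = g x * (g' c * r c)"
      using zero by auto
    then have "f x = g x * r c"
      using g'_pos[of c] x by simp
    then show ?thesis
      using c g_pos[OF x] by auto
  qed
  show bounds: "r a < f x / g x \<and> f x / g x < r x" if x: "a < x" "x < b" for x
  proof -
    obtain c where "a < c" "c < x" "f x / g x = r c"
      using ratio[OF x] by blast
    then show ?thesis
      using r_mono[of a c] r_mono[of c x] x by simp
  qed
  show "f x / g x < f y / g y" if xy: "a < x" "x < y" "y < b" for x y
  proof (rule deriv_pos_imp_less[where f = "\<lambda>z. f z / g z"
        and f' = "\<lambda>z. g' z * (r z - f z / g z) / g z"])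
    fix z assume z: "x \<le> z" "z \<le> y"
    then have "0 < g z"
      using g_pos xy by simp
    moreover have "DERIV (\<lambda>z. f z / g z) z :> (g' z * r z * g z - f z * g' z) / (g z * g z)"
      using z xy \<open>0 < g z\<close> by (intro DERIV_divide f' g') auto
    ultimately show "DERIV (\<lambda>z. f z / g z) z :> g' z * (r z - f z / g z) / g z"
      by (elim DERIV_cong) (simp add: field_simps)
  next
    fix z assume "x < z" "z < y"
    then show "0 < g' z * (r z - f z / g z) / g z"
      using bounds[of z] g'_pos[of z] g_pos[of z] xy by simp
  qed (rule xy)
qed

lemma is_extremum_onI_max:
  assumes "x \<in> S" "0 < e" "\<And>y. y \<in> S \<Longrightarrow> \<bar>y - x\<bar> < e \<Longrightarrow> f y \<le> f x"
  shows "is_extremum_on S f x"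
  using assms unfolding is_extremum_on_def by blast

lemma is_extremum_onI_min:
  assumes "x \<in> S" "0 < e" "\<And>y. y \<in> S \<Longrightarrow> \<bar>y - x\<bar> < e \<Longrightarrow> f x \<le> f y"
  shows "is_extremum_on S f x"
  using assms unfolding is_extremum_on_def by blast

lemma is_extremum_on_deriv_zero:
  assumes "is_extremum_on S f x" "x \<in> interior S" "DERIV f x :> l"
  shows "l = 0"
proof -
  obtain e where "0 < e" and extr: "(\<forall>y\<in>S. \<bar>y - x\<bar> < e \<longrightarrow> f y \<le> f x)
      \<or> (\<forall>y\<in>S. \<bar>y - x\<bar> < e \<longrightarrow> f x \<le> f y)"
    using assms(1) unfolding is_extremum_on_def by blast
  obtain d where "0 < d" "ball x d \<subseteq> S"
    using assms(2) mem_interior by blast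
  define m where "m = min e d"
  have m: "0 < m"
    using \<open>0 < e\<close> \<open>0 < d\<close> by (simp add: m_def)
  have near: "y \<in> S" "\<bar>y - x\<bar> < e" if "\<bar>x - y\<bar> < m" for y
    using that \<open>ball x d \<subseteq> S\<close> by (auto simp: m_def dist_real_def)
  from extr show ?thesis
  proof
    assume "\<forall>y\<in>S. \<bar>y - x\<bar> < e \<longrightarrow> f y \<le> f x"
    then show ?thesis
      using near by (intro DERIV_local_max[OF assms(3) m]) blast
  next
    assume "\<forall>y\<in>S. \<bar>y - x\<bar> < e \<longrightarrow> f x \<le> f y"
    then show ?thesis
      using near by (intro DERIV_local_min[OF assms(3) m]) blast
  qed
qed

lemma deriv_sign_change_imp_max:
  fixes f f' :: "real \<Rightarrow> real"
  assumes "a < x" "x < b" and "\<And>z. a \<le> z \<Longrightarrow> z \<le> b \<Longrightarrow> DERIV f z :> f' z"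
    and "\<And>z. a < z \<Longrightarrow> z < x \<Longrightarrow> 0 < f' z" "\<And>z. x < z \<Longrightarrow> z < b \<Longrightarrow> f' z < 0"
    and "a \<le> y" "y \<le> b"
  shows "f y \<le> f x"
proof (cases y x rule: linorder_cases)
  case less
  have "f y < f x"
    by (rule deriv_pos_imp_less[of y x f f']) (use less assms in auto)
  then show ?thesis by simp
next
  case greater
  have "f y < f x"
    by (rule deriv_neg_imp_greater[of x y f f']) (use greater assms in auto)
  then show ?thesis by simp
qed simp

definition ncot :: "real \<Rightarrow> real" where
  "ncot x = - pi * cot (pi * x)"

lemma has_real_derivative_ncot:
  assumes "0 < x" "x < 1"
  shows "DERIV ncot x :> pi\<^sup>2 + (ncot x)\<^sup>2"
proof -
  have s: "sin (pi * x) \<noteq> 0"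
    using sin_gt_zero[of "pi * x"] assms by simp
  have "DERIV ncot x :> pi\<^sup>2 / (sin (pi * x))\<^sup>2"
    unfolding ncot_def[abs_def] using s
    by (auto intro!: derivative_eq_intros DERIV_cot[THEN DERIV_chain2] simp: power2_eq_square field_simps)
  also have "pi\<^sup>2 / (sin (pi * x))\<^sup>2 = pi\<^sup>2 + (ncot x)\<^sup>2"
    using s by (simp add: ncot_def cot_def field_simps power2_eq_square flip: distrib_left)
  finally show ?thesis .
qed

lemma ncot_half: "ncot (1/2) = 0"
  by (simp add: ncot_def cot_def)

lemma ncot_three_quarters: "ncot (3/4) = pi"
proof -
  have e: "pi * (3/4) = pi - pi/4" by simp
  have s: "sin (pi * (3/4)) = sqrt 2 / 2"
    unfolding e by (subst sin_pi_minus) (simp add: sin_45)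
  have c: "cos (pi * (3/4)) = - (sqrt 2 / 2)"
    unfolding e by (subst cos_pi_minus) (simp add: cos_45)
  have "cot (pi * (3/4)) = - (sqrt 2 / 2) / (sqrt 2 / 2)"
    unfolding cot_def s c by (rule refl)
  then show ?thesis by (simp add: ncot_def)
qed

lemma pi_squared_gt_9: "9 < pi\<^sup>2"
proof -
  have "3 * 3 < pi * pi"
    using pi_gt3 by (intro mult_strict_mono) auto
  then show ?thesis by (simp add: power2_eq_square)
qed

lemma ncot_lower_bound:
  assumes "1/2 \<le> x" "x < 1"
  shows "pi\<^sup>2 * (x - 1/2) \<le> ncot x"
proof (cases "x = 1/2")
  case False
  then have "1/2 < x" using assms by simp
  then obtain z where "1/2 < z" "z < x"
      and "(ncot x - pi\<^sup>2 * (x - 1/2)) - (ncot (1/2) - pi\<^sup>2 * (1/2 - 1/2)) = (x - 1/2) * (ncot z)\<^sup>2"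
    using MVT2[of "1/2" x "\<lambda>x. ncot x - pi\<^sup>2 * (x - 1/2)" "\<lambda>z. (ncot z)\<^sup>2"] assms
    by (force intro!: derivative_eq_intros has_real_derivative_ncot)
  then have "ncot x - pi\<^sup>2 * (x - 1/2) = (x - 1/2) * (ncot z)\<^sup>2"
    by (simp add: ncot_half)
  moreover have "0 \<le> (x - 1/2) * (ncot z)\<^sup>2"
    using assms by simp
  ultimately show ?thesis by linarith
next
  case True
  show ?thesis unfolding True by (simp add: ncot_half)
qed

lemma ncot_nonneg:
  assumes "1/2 \<le> x" "x < 1"
  shows "0 \<le> ncot x"
proof -
  have "0 \<le> pi\<^sup>2 * (x - 1/2)" using assms by simp
  then show ?thesis using ncot_lower_bound[OF assms] by linarith
qed

text \<open>With \<open>c = \<pi>\<^sup>2\<close>, \<open>d = 2x - 1\<close>, \<open>t = ncot x\<close>, \<open>\<alpha> = 1/(k-x)\<close>, \<open>\<beta> = 1/(k+x-1)\<close>, the left-hand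
side is the derivative of \<open>(t + \<beta>)(\<alpha> - t)\<close>, using \<open>t' = c + t\<^sup>2\<close>, \<open>\<alpha>' = \<alpha>\<^sup>2\<close>, \<open>\<beta>' = -\<beta>\<^sup>2\<close>.\<close>

lemma slope_product_deriv_neg:
  fixes c d t \<alpha> \<beta> :: real
  assumes "9 < c" "0 < d" "0 < \<beta>" "\<beta> \<le> \<alpha>" "\<alpha> \<le> 1" "\<alpha> - \<beta> \<le> d" "c * d \<le> 2 * t"
  shows "(c + t\<^sup>2 - \<beta>\<^sup>2) * (\<alpha> - t) + (\<alpha>\<^sup>2 - c - t\<^sup>2) * (t + \<beta>) < 0"
proof -
  have expand: "(c + t\<^sup>2 - \<beta>\<^sup>2) * (\<alpha> - t) + (\<alpha>\<^sup>2 - c - t\<^sup>2) * (t + \<beta>)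
      = (c + t\<^sup>2) * ((\<alpha> - \<beta>) - 2 * t) + t * (\<alpha>\<^sup>2 + \<beta>\<^sup>2) + \<alpha> * \<beta> * (\<alpha> - \<beta>)"
    by (simp add: algebra_simps power2_eq_square)
  have cd: "d < c * d" using assms by simp
  then have neg: "(\<alpha> - \<beta>) - 2 * t < 0" using assms by linarith
  have t: "0 < t" using cd assms by linarith
  have "(c + t\<^sup>2) * ((\<alpha> - \<beta>) - 2 * t) \<le> c * ((\<alpha> - \<beta>) - 2 * t)"
    using neg by (intro mult_right_mono_neg) auto
  moreover have "c * (\<alpha> - \<beta>) \<le> c * d"
    using assms by (intro mult_left_mono) auto
  ultimately have 1: "(c + t\<^sup>2) * ((\<alpha> - \<beta>) - 2 * t) \<le> c * d - 2 * (c * t)"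
    by (simp add: algebra_simps)
  have "\<alpha>\<^sup>2 + \<beta>\<^sup>2 \<le> 2"
    using assms power_le_one[of \<alpha> 2] power_le_one[of \<beta> 2] by simp
  then have 2: "t * (\<alpha>\<^sup>2 + \<beta>\<^sup>2) \<le> 2 * t"
    using t by (simp add: mult_left_le)
  have "\<alpha> * \<beta> \<le> 1"
    using assms by (intro mult_le_one) auto
  then have "\<alpha> * \<beta> * (\<alpha> - \<beta>) \<le> \<alpha> - \<beta>"
    using assms by (intro mult_left_le_one_le) auto
  then have 3: "\<alpha> * \<beta> * (\<alpha> - \<beta>) \<le> d"
    using assms by linarith
  have "(c - 1) * (c * d) \<le> (c - 1) * (2 * t)"
    using assms by (intro mult_left_mono) auto
  then have 4: "c * (c * d) - c * d \<le> 2 * (c * t) - 2 * t"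
    by (simp add: algebra_simps)
  have "9 * c < c * c"
    using assms by (intro mult_strict_right_mono) auto
  then have "2 * c + 1 < c * c"
    using assms by linarith
  then have "(2 * c + 1) * d < (c * c) * d"
    using assms by (intro mult_strict_right_mono) auto
  then have 5: "2 * (c * d) + d < c * (c * d)"
    by (simp add: algebra_simps)
  show ?thesis
    unfolding expand using 1 2 3 4 5 by linarith
qed

text \<open>The derivative of \<open>ln (t + \<beta>) - ln (\<alpha> - t)\<close> in the same setting.\<close>

lemma log_slope_deriv_identity:
  fixes c t \<alpha> \<beta> :: real
  assumes "t + \<beta> \<noteq> 0" "\<alpha> - t \<noteq> 0"
  shows "(c + t\<^sup>2 - \<beta>\<^sup>2) / (t + \<beta>) - (\<alpha>\<^sup>2 - c - t\<^sup>2) / (\<alpha> - t)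
    = (\<alpha> + \<beta>) * (c / ((t + \<beta>) * (\<alpha> - t)) - 1)"
  using assms by (simp add: divide_simps power2_eq_square) (simp add: algebra_simps)

context
  fixes k :: nat
  assumes k_ge_2: "2 \<le> k"
begin

lemma shifted_k_ge_1:
  assumes "0 \<le> x" "x \<le> 1"
  shows "1 \<le> real k - x" "1 \<le> real k + x - 1"
  using assms k_ge_2 by linarith+

definition cot_gap :: "real \<Rightarrow> real" where
  "cot_gap x = 1 / (real k - x) - ncot x"

lemma has_real_derivative_cot_gap:
  assumes "0 < x" "x < 1"
  shows "DERIV cot_gap x :> (1 / (real k - x))\<^sup>2 - pi\<^sup>2 - (ncot x)\<^sup>2"
  using shifted_k_ge_1[of x] assms unfolding cot_gap_def[abs_def]
  by (auto intro!: derivative_eq_intros has_real_derivative_ncot simp: power2_eq_square field_simps)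

lemma cot_gap_strict_antimono:
  assumes "0 < x" "x < y" "y < 1"
  shows "cot_gap y < cot_gap x"
proof (rule deriv_neg_imp_greater[where f = cot_gap
      and f' = "\<lambda>z. (1 / (real k - z))\<^sup>2 - pi\<^sup>2 - (ncot z)\<^sup>2"])
  fix z assume "x < z" "z < y"
  then have "(1 / (real k - z))\<^sup>2 \<le> 1"
    using shifted_k_ge_1[of z] assms by (intro power_le_one) auto
  moreover have "0 \<le> (ncot z)\<^sup>2" by simp
  ultimately show "(1 / (real k - z))\<^sup>2 - pi\<^sup>2 - (ncot z)\<^sup>2 < 0"
    using pi_squared_gt_9 by linarith
qed (use assms has_real_derivative_cot_gap in auto)

lemma cot_equation_iff_cot_gap_zero:
  assumes "0 < x" "x < 1"
  shows "cot (pi * x) = - 1 / (pi * (real k - x)) \<longleftrightarrow> cot_gap x = 0"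
proof -
  have "0 < real k - x"
    using shifted_k_ge_1[of x] assms by simp
  then show ?thesis
    unfolding cot_gap_def ncot_def using pi_gt_zero by (auto simp: field_simps)
qed

lemma cot_gap_root_exists: "\<exists>A. 1/2 < A \<and> A < 3/4 \<and> cot_gap A = 0"
proof -
  have pos: "0 < cot_gap (1/2)"
    using k_ge_2 by (simp add: cot_gap_def ncot_half)
  have "1 / (real k - 3/4) \<le> 1"
    using k_ge_2 by simp
  then have neg: "cot_gap (3/4) < 0"
    using pi_gt3 by (simp add: cot_gap_def ncot_three_quarters)
  have "\<forall>x. 1/2 \<le> x \<and> x \<le> 3/4 \<longrightarrow> isCont cot_gap x"
    using DERIV_isCont[OF has_real_derivative_cot_gap] by simp
  then obtain A where "1/2 \<le> A" "A \<le> 3/4" "cot_gap A = 0"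
    using IVT2[of cot_gap "3/4" 0 "1/2"] pos neg by auto
  moreover have "A \<noteq> 1/2" "A \<noteq> 3/4"
    using pos neg \<open>cot_gap A = 0\<close> by (metis less_irrefl)+
  ultimately show ?thesis by (auto simp: less_le)
qed

lemma A_k_unique: "\<exists>!A. 1/2 < A \<and> A < 1 \<and> cot (pi * A) = - 1 / (pi * (real k - A))"
proof -
  obtain A where A: "1/2 < A" "A < 3/4" "cot_gap A = 0"
    using cot_gap_root_exists by blast
  show ?thesis
  proof (rule ex1I[of _ A])
    show "1/2 < A \<and> A < 1 \<and> cot (pi * A) = - 1 / (pi * (real k - A))"
      using A cot_equation_iff_cot_gap_zero[of A] by simp
  next
    fix B assume B: "1/2 < B \<and> B < 1 \<and> cot (pi * B) = - 1 / (pi * (real k - B))"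
    then have "cot_gap B = 0"
      using cot_equation_iff_cot_gap_zero[of B] by simp
    then show "B = A"
      using cot_gap_strict_antimono[of A B] cot_gap_strict_antimono[of B A] A B
      by (cases B A rule: linorder_cases) auto
  qed
qed

lemma
  shows A_k_gt_half: "1/2 < A_k k" and A_k_lt_three_quarters: "A_k k < 3/4"
    and cot_gap_A_k: "cot_gap (A_k k) = 0"
proof -
  obtain A where A: "1/2 < A" "A < 3/4" "cot_gap A = 0"
    using cot_gap_root_exists by blast
  then have "A_k k = A"
    unfolding A_k_def using cot_equation_iff_cot_gap_zero[of A]
    by (intro the1_equality[OF A_k_unique]) auto
  with A show "1/2 < A_k k" "A_k k < 3/4" "cot_gap (A_k k) = 0" by auto
qed

lemma A_k_lt_1: "A_k k < 1"
  using A_k_lt_three_quarters by simp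

lemma cot_gap_pos:
  assumes "1/2 \<le> x" "x < A_k k"
  shows "0 < cot_gap x"
  using cot_gap_strict_antimono[of x "A_k k"] assms A_k_lt_1 cot_gap_A_k by simp

definition cot_sum :: "real \<Rightarrow> real" where
  "cot_sum x = ncot x + 1 / (real k + x - 1)"

lemma cot_sum_pos:
  assumes "1/2 \<le> x" "x < 1"
  shows "0 < cot_sum x"
  using ncot_nonneg[OF assms] shifted_k_ge_1[of x] assms
  by (simp add: cot_sum_def add_nonneg_pos)

text \<open>\<open>cot_gap\<close> and \<open>- cot_sum\<close> are the logarithmic derivatives of \<open>sin (\<pi> x)/(k - x)\<close>
and \<open>sin (\<pi> x)/(k + x - 1)\<close>.\<close>

definition psi_deriv :: "real \<Rightarrow> real \<Rightarrow> real" where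
  "psi_deriv p x = p * ((sin (pi * x) / (real k - x)) powr p * cot_gap x
      - (sin (pi * x) / (real k + x - 1)) powr p * cot_sum x)"

lemma psi_eq_powr_sum:
  assumes "0 < x" "x < 1"
  shows "psi k p x = (sin (pi * x) / (real k - x)) powr p + (sin (pi * x) / (real k + x - 1)) powr p"
proof -
  have "0 < sin (pi * x)"
    using sin_gt_zero[of "pi * x"] assms by simp
  moreover have "0 < real k - x" "0 < real k + x - 1"
    using shifted_k_ge_1[of x] assms by simp_all
  ultimately show ?thesis
    unfolding psi_def by (simp add: powr_divide distrib_left)
qed

lemma has_real_derivative_psi:
  assumes "0 < x" "x < 1"
  shows "DERIV (psi k p) x :> psi_deriv p x"
proof -
  have s: "0 < sin (pi * x)"
    using sin_gt_zero[of "pi * x"] assms by simp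
  note k_x = shifted_k_ge_1[of x]
  have "DERIV (\<lambda>x. sin (pi * x) / (real k - x)) x
      :> sin (pi * x) / (real k - x) * (cos (pi * x) * pi / sin (pi * x) - (- 1) / (real k - x))"
    using k_x assms s by (intro DERIV_quotient_log derivative_eq_intros) auto
  then have "DERIV (\<lambda>x. sin (pi * x) / (real k - x)) x :> sin (pi * x) / (real k - x) * cot_gap x"
    by (simp add: cot_gap_def ncot_def cot_def ac_simps)
  moreover have "DERIV (\<lambda>x. sin (pi * x) / (real k + x - 1)) x
      :> sin (pi * x) / (real k + x - 1) * (cos (pi * x) * pi / sin (pi * x) - 1 / (real k + x - 1))"
    using k_x assms s by (intro DERIV_quotient_log derivative_eq_intros) auto
  then have "DERIV (\<lambda>x. sin (pi * x) / (real k + x - 1)) x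
      :> sin (pi * x) / (real k + x - 1) * - cot_sum x"
    by (simp add: cot_sum_def ncot_def cot_def ac_simps)
  ultimately have "DERIV (\<lambda>x. (sin (pi * x) / (real k - x)) powr p
      + (sin (pi * x) / (real k + x - 1)) powr p) x
      :> p * cot_gap x * (sin (pi * x) / (real k - x)) powr p
       + p * - cot_sum x * (sin (pi * x) / (real k + x - 1)) powr p"
    using k_x assms s by (intro DERIV_add DERIV_powr_log) auto
  then have "DERIV (\<lambda>x. (sin (pi * x) / (real k - x)) powr p
      + (sin (pi * x) / (real k + x - 1)) powr p) x :> psi_deriv p x"
    by (simp add: psi_deriv_def algebra_simps)
  then show ?thesis
  proof (rule has_field_derivative_transform_within_open)
    show "(sin (pi * y) / (real k - y)) powr p + (sin (pi * y) / (real k + y - 1)) powr p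
        = psi k p y" if "y \<in> {0<..<1}" for y
      using psi_eq_powr_sum[of y] that by simp
  qed (use assms in auto)
qed

definition ptilde_num :: "real \<Rightarrow> real" where
  "ptilde_num x = ln (cot_sum x) - ln (cot_gap x)"

definition ptilde_den :: "real \<Rightarrow> real" where
  "ptilde_den x = ln (real k + x - 1) - ln (real k - x)"

lemma ptilde_den_pos: "1/2 < x \<Longrightarrow> x < 1 \<Longrightarrow> 0 < ptilde_den x"
  using k_ge_2 by (simp add: ptilde_den_def)

lemma p_tilde_eq_ratio:
  assumes "1/2 \<le> x" "x < A_k k"
  shows "p_tilde k x = ptilde_num x / ptilde_den x"
proof -
  have x: "x < 1" using assms A_k_lt_1 by simp
  note k_x = shifted_k_ge_1[of x]
  have "(1 - pi * cot (pi * x) * (real k + x - 1)) /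
      (pi * cot (pi * x) * (real k + x - 1) - 1 + (2 * real k - 1) / (real k - x))
      = cot_sum x / cot_gap x"
    using k_x assms x by (simp add: cot_sum_def cot_gap_def ncot_def field_simps)
  then show ?thesis
    using cot_sum_pos[OF assms(1) x] cot_gap_pos[OF assms]
    by (simp add: p_tilde_def ptilde_num_def ptilde_den_def ln_div)
qed

lemma psi_deriv_sign:
  assumes "1/2 \<le> x" "x < A_k k" "0 < p"
  shows "0 < psi_deriv p x \<longleftrightarrow> ptilde_num x < p * ptilde_den x"
    and "psi_deriv p x < 0 \<longleftrightarrow> p * ptilde_den x < ptilde_num x"
proof -
  have x: "0 < x" "x < 1" using assms A_k_lt_1 by auto
  note k_x = shifted_k_ge_1[of x]
  have s: "0 < sin (pi * x)" using sin_gt_zero[of "pi * x"] x by simp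
  define u where "u = (sin (pi * x) / (real k - x)) powr p * cot_gap x"
  define v where "v = (sin (pi * x) / (real k + x - 1)) powr p * cot_sum x"
  have uv: "0 < u" "0 < v"
    using cot_gap_pos[OF assms(1,2)] cot_sum_pos[OF assms(1)] x s k_x by (auto simp: u_def v_def)
  have "ln u - ln v = p * ptilde_den x - ptilde_num x"
    using s k_x cot_gap_pos[OF assms(1,2)] cot_sum_pos[OF assms(1)] x
    by (simp add: u_def v_def ln_mult ln_powr ln_div ptilde_den_def ptilde_num_def algebra_simps)
  moreover have "psi_deriv p x = p * (u - v)"
    by (simp add: psi_deriv_def u_def v_def)
  moreover have "v < u \<longleftrightarrow> ln v < ln u" "u < v \<longleftrightarrow> ln u < ln v"
    using uv by simp_all
  ultimately show "0 < psi_deriv p x \<longleftrightarrow> ptilde_num x < p * ptilde_den x"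
    and "psi_deriv p x < 0 \<longleftrightarrow> p * ptilde_den x < ptilde_num x"
    using assms(3) by (auto simp: zero_less_mult_iff mult_less_0_iff)
qed

lemma psi_deriv_A_k_neg:
  assumes "0 < p"
  shows "psi_deriv p (A_k k) < 0"
proof -
  have A: "1/2 \<le> A_k k" "A_k k < 1"
    using A_k_gt_half A_k_lt_1 by auto
  then have "0 < sin (pi * A_k k)" "0 < real k + A_k k - 1"
    using sin_gt_zero[of "pi * A_k k"] shifted_k_ge_1[of "A_k k"] by auto
  then have "0 < (sin (pi * A_k k) / (real k + A_k k - 1)) powr p * cot_sum (A_k k)"
    using cot_sum_pos[OF A] by simp
  then show ?thesis
    using assms by (simp add: psi_deriv_def cot_gap_A_k mult_pos_neg)
qed

lemma has_real_derivative_cot_sum: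
  assumes "0 < x" "x < 1"
  shows "DERIV cot_sum x :> pi\<^sup>2 + (ncot x)\<^sup>2 - (1 / (real k + x - 1))\<^sup>2"
  using shifted_k_ge_1[of x] assms unfolding cot_sum_def[abs_def]
  by (auto intro!: derivative_eq_intros has_real_derivative_ncot simp: power2_eq_square field_simps)

definition slope_product :: "real \<Rightarrow> real" where
  "slope_product x = cot_sum x * cot_gap x"

lemma has_real_derivative_slope_product:
  assumes "0 < x" "x < 1"
  shows "DERIV slope_product x :> (pi\<^sup>2 + (ncot x)\<^sup>2 - (1 / (real k + x - 1))\<^sup>2) * cot_gap x
      + ((1 / (real k - x))\<^sup>2 - pi\<^sup>2 - (ncot x)\<^sup>2) * cot_sum x"
  unfolding slope_product_def[abs_def]
  by (intro DERIV_mult has_real_derivative_cot_sum has_real_derivative_cot_gap assms)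

lemma slope_product_half: "slope_product (1/2) = 1 / (real k - 1/2)\<^sup>2"
  using k_ge_2 by (simp add: slope_product_def cot_sum_def cot_gap_def ncot_half power2_eq_square)

lemma slope_product_pos: "1/2 \<le> x \<Longrightarrow> x < A_k k \<Longrightarrow> 0 < slope_product x"
  using cot_sum_pos[of x] cot_gap_pos[of x] A_k_lt_1 by (simp add: slope_product_def)

lemma slope_product_strict_antimono:
  assumes "1/2 \<le> y" "y < z" "z < 1"
  shows "slope_product z < slope_product y"
proof (rule deriv_neg_imp_greater[where f = slope_product
      and f' = "\<lambda>x. (pi\<^sup>2 + (ncot x)\<^sup>2 - (1 / (real k + x - 1))\<^sup>2) * cot_gap x
        + ((1 / (real k - x))\<^sup>2 - pi\<^sup>2 - (ncot x)\<^sup>2) * cot_sum x"])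
  fix x assume "y \<le> x" "x \<le> z"
  then show "DERIV slope_product x :> (pi\<^sup>2 + (ncot x)\<^sup>2 - (1 / (real k + x - 1))\<^sup>2) * cot_gap x
        + ((1 / (real k - x))\<^sup>2 - pi\<^sup>2 - (ncot x)\<^sup>2) * cot_sum x"
    using assms by (intro has_real_derivative_slope_product) auto
next
  fix x assume x: "y < x" "x < z"
  have k_x: "1 \<le> real k - x" "real k - x \<le> real k + x - 1"
    using shifted_k_ge_1[of x] x assms by auto
  have d: "0 < 2 * x - 1"
    using x assms by simp
  have \<beta>: "0 < 1 / (real k + x - 1)"
    using k_x by simp
  have \<beta>\<alpha>: "1 / (real k + x - 1) \<le> 1 / (real k - x)"
    using k_x by (intro divide_left_mono) auto
  have \<alpha>: "1 / (real k - x) \<le> 1"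
    using k_x by simp
  have "1 * 1 \<le> (real k - x) * (real k + x - 1)"
    using k_x by (intro mult_mono) auto
  then have "(2 * x - 1) / ((real k - x) * (real k + x - 1)) \<le> (2 * x - 1) / 1"
    using d by (intro divide_left_mono) auto
  moreover have "1 / (real k - x) - 1 / (real k + x - 1)
      = (2 * x - 1) / ((real k - x) * (real k + x - 1))"
    using k_x by (simp add: field_simps)
  ultimately have \<alpha>\<beta>: "1 / (real k - x) - 1 / (real k + x - 1) \<le> 2 * x - 1"
    by simp
  have t: "pi\<^sup>2 * (2 * x - 1) \<le> 2 * ncot x"
    using ncot_lower_bound[of x] x assms by (simp add: algebra_simps)
  show "(pi\<^sup>2 + (ncot x)\<^sup>2 - (1 / (real k + x - 1))\<^sup>2) * cot_gap x
        + ((1 / (real k - x))\<^sup>2 - pi\<^sup>2 - (ncot x)\<^sup>2) * cot_sum x < 0"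
    using slope_product_deriv_neg[OF pi_squared_gt_9 d \<beta> \<beta>\<alpha> \<alpha> \<alpha>\<beta> t]
    by (simp add: cot_gap_def cot_sum_def)
qed (rule assms)

lemma has_real_derivative_ptilde_den:
  assumes "0 < x" "x < 1"
  shows "DERIV ptilde_den x :> 1 / (real k - x) + 1 / (real k + x - 1)"
  using shifted_k_ge_1[of x] assms unfolding ptilde_den_def[abs_def]
  by (auto intro!: derivative_eq_intros simp: field_simps)

lemma has_real_derivative_ptilde_num:
  assumes "1/2 \<le> x" "x < A_k k"
  shows "DERIV ptilde_num x
    :> (1 / (real k - x) + 1 / (real k + x - 1)) * (pi\<^sup>2 / slope_product x - 1)"
proof -
  have x: "0 < x" "x < 1"
    using assms A_k_lt_1 by auto
  have pos: "0 < cot_sum x" "0 < cot_gap x"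
    using cot_sum_pos[of x] cot_gap_pos[OF assms] assms x by auto
  have "DERIV ptilde_num x
      :> 1 / cot_sum x * (pi\<^sup>2 + (ncot x)\<^sup>2 - (1 / (real k + x - 1))\<^sup>2)
       - 1 / cot_gap x * ((1 / (real k - x))\<^sup>2 - pi\<^sup>2 - (ncot x)\<^sup>2)"
    unfolding ptilde_num_def[abs_def]
    by (intro DERIV_diff DERIV_chain2[OF DERIV_ln_divide] has_real_derivative_cot_sum
        has_real_derivative_cot_gap pos x)
  moreover have "1 / cot_sum x * (pi\<^sup>2 + (ncot x)\<^sup>2 - (1 / (real k + x - 1))\<^sup>2)
       - 1 / cot_gap x * ((1 / (real k - x))\<^sup>2 - pi\<^sup>2 - (ncot x)\<^sup>2)
      = (1 / (real k - x) + 1 / (real k + x - 1)) * (pi\<^sup>2 / slope_product x - 1)"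
    using log_slope_deriv_identity[of "ncot x" "1 / (real k + x - 1)" "1 / (real k - x)" "pi\<^sup>2"] pos
    by (simp add: slope_product_def cot_sum_def cot_gap_def)
  ultimately show ?thesis by simp
qed

lemma
  shows p_tilde_bounds: "\<And>x. 1/2 < x \<Longrightarrow> x < A_k k \<Longrightarrow>
      pi\<^sup>2 * (real k - 1/2)\<^sup>2 - 1 < p_tilde k x \<and> p_tilde k x < pi\<^sup>2 / slope_product x - 1"
    and p_tilde_strict_mono: "\<And>x y. 1/2 < x \<Longrightarrow> x < y \<Longrightarrow> y < A_k k \<Longrightarrow>
      p_tilde k x < p_tilde k y"
proof -
  define g' where "g' x = 1 / (real k - x) + 1 / (real k + x - 1)" for x
  define r where "r x = pi\<^sup>2 / slope_product x - 1" for x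
  have zero: "ptilde_num (1/2) = 0" "ptilde_den (1/2) = 0"
    by (simp_all add: ptilde_num_def ptilde_den_def cot_sum_def cot_gap_def ncot_half)
  have den': "DERIV ptilde_den x :> g' x" if "1/2 \<le> x" "x < A_k k" for x
    unfolding g'_def using has_real_derivative_ptilde_den that A_k_lt_1 by simp
  have g'_pos: "0 < g' x" if "1/2 < x" "x < A_k k" for x
    using shifted_k_ge_1[of x] that A_k_lt_1 by (simp add: g'_def add_pos_pos)
  have num': "DERIV ptilde_num x :> g' x * r x" if "1/2 \<le> x" "x < A_k k" for x
    unfolding g'_def r_def by (rule has_real_derivative_ptilde_num[OF that])
  have r_mono: "r x < r y" if "1/2 \<le> x" "x < y" "y < A_k k" for x y
    using slope_product_strict_antimono[of x y] slope_product_pos[of y] that A_k_lt_1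
    by (simp add: r_def divide_strict_left_mono)
  have ratio: "p_tilde k x = ptilde_num x / ptilde_den x" if "1/2 < x" "x < A_k k" for x
    using p_tilde_eq_ratio that by simp
  show "pi\<^sup>2 * (real k - 1/2)\<^sup>2 - 1 < p_tilde k x \<and> p_tilde k x < pi\<^sup>2 / slope_product x - 1"
    if "1/2 < x" "x < A_k k" for x
    using monotone_lhospital_bounds[of ptilde_num "1/2" ptilde_den "A_k k" g' r x,
        OF zero den' g'_pos num' r_mono that] ratio[OF that]
    by (simp add: r_def slope_product_half)
  show "p_tilde k x < p_tilde k y" if "1/2 < x" "x < y" "y < A_k k" for x y
    using monotone_lhospital_mono[of ptilde_num "1/2" ptilde_den "A_k k" g' r x y,
        OF zero den' g'_pos num' r_mono that] ratio[of x] ratio[of y] that by simp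
qed

lemma pi_squared_k_half_gt_9: "9 < pi\<^sup>2 * (real k - 1/2)\<^sup>2"
proof -
  have "1 \<le> (real k - 1/2)\<^sup>2"
    using k_ge_2 by (intro one_le_power) simp
  then have "pi\<^sup>2 * 1 \<le> pi\<^sup>2 * (real k - 1/2)\<^sup>2"
    by (intro mult_left_mono) auto
  then show ?thesis
    using pi_squared_gt_9 by linarith
qed

lemma p_tilde_gt_1: "1/2 < x \<Longrightarrow> x < A_k k \<Longrightarrow> 1 < p_tilde k x"
  using p_tilde_bounds[of x] pi_squared_k_half_gt_9 by linarith

lemma
  assumes "1/2 < x" "x < A_k k" "0 < p"
  shows psi_deriv_pos_iff: "0 < psi_deriv p x \<longleftrightarrow> p_tilde k x < p"
    and psi_deriv_neg_iff: "psi_deriv p x < 0 \<longleftrightarrow> p < p_tilde k x"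
proof -
  have "0 < ptilde_den x"
    using ptilde_den_pos[of x] assms A_k_lt_1 by simp
  moreover have "p_tilde k x = ptilde_num x / ptilde_den x"
    using p_tilde_eq_ratio[of x] assms by simp
  ultimately show "0 < psi_deriv p x \<longleftrightarrow> p_tilde k x < p"
    and "psi_deriv p x < 0 \<longleftrightarrow> p < p_tilde k x"
    using psi_deriv_sign[of x p] assms
    by (simp_all add: pos_divide_less_eq pos_less_divide_eq mult.commute)
qed

lemma psi_nonneg: "0 \<le> psi k p x"
  unfolding psi_def by (intro mult_nonneg_nonneg add_nonneg_nonneg) auto

lemma psi_extremum_at_one: "is_extremum_on {1/2..1} (psi k p) 1"
  by (rule is_extremum_onI_min[where e = 1]) (auto simp: psi_def psi_nonneg)

lemma psi_strictly_increasing_near_half: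
  assumes "pi\<^sup>2 * (real k - 1/2)\<^sup>2 - 1 < p"
  obtains e where "0 < e" "e \<le> A_k k - 1/2"
    and "\<And>y. 1/2 < y \<Longrightarrow> y < 1/2 + e \<Longrightarrow> psi k p (1/2) < psi k p y"
proof -
  define F where "F x = pi\<^sup>2 / slope_product x - 1" for x
  have p: "0 < p"
    using assms pi_squared_k_half_gt_9 by linarith
  have F_half: "F (1/2) = pi\<^sup>2 * (real k - 1/2)\<^sup>2 - 1"
    by (simp add: F_def slope_product_half)
  have "isCont slope_product (1/2)"
    by (rule DERIV_isCont[OF has_real_derivative_slope_product]) auto
  then have "isCont F (1/2)"
    unfolding F_def using k_ge_2 by (intro continuous_intros) (auto simp: slope_product_half)
  then obtain d where d: "0 < d" "\<And>x. x \<noteq> 1/2 \<Longrightarrow> \<bar>x - 1/2\<bar> < d \<Longrightarrow> \<bar>F x - F (1/2)\<bar> < p - F (1/2)"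
    using assms F_half unfolding isCont_def LIM_eq by (metis real_norm_def diff_gt_0_iff_gt)
  define e where "e = min d (A_k k - 1/2)"
  show ?thesis
  proof (rule that)
    show "0 < e" "e \<le> A_k k - 1/2"
      using d A_k_gt_half by (auto simp: e_def)
  next
    fix y assume y: "1/2 < y" "y < 1/2 + e"
    show "psi k p (1/2) < psi k p y"
    proof (rule deriv_pos_imp_less[where f = "psi k p" and f' = "psi_deriv p"])
      fix z assume "1/2 \<le> z" "z \<le> y"
      then show "DERIV (psi k p) z :> psi_deriv p z"
        using y A_k_lt_1 by (intro has_real_derivative_psi) (auto simp: e_def)
    next
      fix z assume z: "1/2 < z" "z < y"
      then have zA: "z < A_k k"
        using y by (simp add: e_def)
      have "\<bar>z - 1/2\<bar> < d"
        using z y by (auto simp: e_def)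
      then have "\<bar>F z - F (1/2)\<bar> < p - F (1/2)"
        using d(2)[of z] z by simp
      then have "F z < p"
        by (simp add: abs_less_iff)
      then show "0 < psi_deriv p z"
        using p_tilde_bounds[OF z(1) zA] psi_deriv_pos_iff[OF z(1) zA p] by (simp add: F_def)
    qed (use y in simp)
  qed
qed

lemma psi_extremum_at_half:
  assumes "0 < p"
  shows "is_extremum_on {1/2..1} (psi k p) (1/2)"
proof (cases "pi\<^sup>2 * (real k - 1/2)\<^sup>2 - 1 < p")
  case True
  then obtain e where "0 < e"
    and incr: "\<And>y. 1/2 < y \<Longrightarrow> y < 1/2 + e \<Longrightarrow> psi k p (1/2) < psi k p y"
    using psi_strictly_increasing_near_half by blast
  show ?thesis
  proof (rule is_extremum_onI_min[OF _ \<open>0 < e\<close>])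
    fix y assume "y \<in> {1/2..1}" "\<bar>y - 1/2\<bar> < e"
    then show "psi k p (1/2) \<le> psi k p y"
    proof (cases "y = 1/2")
      case True
      then show ?thesis by (simp only: order_refl)
    qed (use incr[of y] in auto)
  qed simp
next
  case False
  then have p_le: "p \<le> pi\<^sup>2 * (real k - 1/2)\<^sup>2 - 1"
    by simp
  show ?thesis
  proof (rule is_extremum_onI_max[where e = "A_k k - 1/2"])
    fix y assume y: "y \<in> {1/2..1}" "\<bar>y - 1/2\<bar> < A_k k - 1/2"
    show "psi k p y \<le> psi k p (1/2)"
    proof (cases "y = 1/2")
      case False
      then have y': "1/2 < y" "y < A_k k"
        using y by auto
      have "psi k p y < psi k p (1/2)"
      proof (rule deriv_neg_imp_greater[where f = "psi k p" and f' = "psi_deriv p"])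
        fix z assume "1/2 \<le> z" "z \<le> y"
        then show "DERIV (psi k p) z :> psi_deriv p z"
          using y' A_k_lt_1 by (intro has_real_derivative_psi) auto
      next
        fix z assume z: "1/2 < z" "z < y"
        then show "psi_deriv p z < 0"
          using p_tilde_bounds[of z] psi_deriv_neg_iff[of z p] p_le y' assms by auto
      qed (rule y')
      then show ?thesis by simp
    next
      case True
      then show ?thesis by (simp only: order_refl)
    qed
  qed (use A_k_gt_half in auto)
qed

lemma psi_extremum_exists:
  assumes "pi\<^sup>2 * (real k - 1/2)\<^sup>2 - 1 < p"
  shows "\<exists>x. 1/2 < x \<and> x < A_k k \<and> is_extremum_on {1/2..1} (psi k p) x"
proof -
  define A where "A = A_k k"
  have A: "1/2 < A" "A < 1"
    using A_k_gt_half A_k_lt_1 by (auto simp: A_def)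
  have p: "0 < p"
    using assms pi_squared_k_half_gt_9 by linarith
  have deriv: "DERIV (psi k p) z :> psi_deriv p z" if "1/2 \<le> z" "z \<le> A" for z
    using that A by (intro has_real_derivative_psi) auto
  obtain e where "0 < e" "e \<le> A - 1/2"
    and incr: "\<And>y. 1/2 < y \<Longrightarrow> y < 1/2 + e \<Longrightarrow> psi k p (1/2) < psi k p y"
    using psi_strictly_increasing_near_half[OF assms] unfolding A_def by blast
  obtain d where "0 < d" and decr: "\<And>h. 0 < h \<Longrightarrow> h < d \<Longrightarrow> psi k p A < psi k p (A - h)"
    using DERIV_neg_dec_left[OF deriv psi_deriv_A_k_neg[OF p]] A unfolding A_def by auto
  have "continuous_on {1/2..A} (psi k p)"
    using deriv by (intro DERIV_atLeastAtMost_imp_continuous_on) blast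
  then obtain x where x: "x \<in> {1/2..A}" and max: "\<And>y. y \<in> {1/2..A} \<Longrightarrow> psi k p y \<le> psi k p x"
    using continuous_attains_sup[of "{1/2..A}" "psi k p"] A by auto
  have "x \<noteq> 1/2"
  proof
    assume x_half: "x = 1/2"
    have "psi k p (1/2 + e/2) \<le> psi k p (1/2)"
      using max[of "1/2 + e/2"] \<open>0 < e\<close> \<open>e \<le> A - 1/2\<close> unfolding x_half by simp
    then show False
      using incr[of "1/2 + e/2"] \<open>0 < e\<close> by simp
  qed
  moreover have "x \<noteq> A"
  proof
    assume x_A: "x = A"
    define h where "h = min (d/2) (A - 1/2)"
    have h: "0 < h" "h < d" "1/2 \<le> A - h"
      using \<open>0 < d\<close> A by (auto simp: h_def min_def)
    have "psi k p (A - h) \<le> psi k p A"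
      using max[of "A - h"] h unfolding x_A by simp
    then show False
      using decr[OF h(1,2)] by simp
  qed
  ultimately have x': "1/2 < x" "x < A"
    using x by auto
  have "is_extremum_on {1/2..1} (psi k p) x"
    using x' A max by (intro is_extremum_onI_max[where e = "min (x - 1/2) (A - x)"]) auto
  with x' show ?thesis
    unfolding A_def by blast
qed

lemma psi_extremum_iff_p_tilde:
  assumes x: "1/2 < x" "x < A_k k" and "0 < p"
  shows "is_extremum_on {1/2..1} (psi k p) x \<longleftrightarrow> p = p_tilde k x"
proof
  assume "is_extremum_on {1/2..1} (psi k p) x"
  moreover have "x \<in> interior {1/2..1}"
    using x A_k_lt_1 by simp
  moreover have "DERIV (psi k p) x :> psi_deriv p x"
    using x A_k_lt_1 by (intro has_real_derivative_psi) auto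
  ultimately have "psi_deriv p x = 0"
    by (rule is_extremum_on_deriv_zero)
  then show "p = p_tilde k x"
    using psi_deriv_pos_iff[OF x \<open>0 < p\<close>] psi_deriv_neg_iff[OF x \<open>0 < p\<close>] by auto
next
  assume p: "p = p_tilde k x"
  have "psi k p y \<le> psi k p x" if "1/2 \<le> y" "y \<le> A_k k" for y
  proof (rule deriv_sign_change_imp_max[where f = "psi k p" and f' = "psi_deriv p"])
    fix z assume "1/2 \<le> z" "z \<le> A_k k"
    then show "DERIV (psi k p) z :> psi_deriv p z"
      using A_k_lt_1 by (intro has_real_derivative_psi) auto
  next
    fix z assume "1/2 < z" "z < x"
    then show "0 < psi_deriv p z"
      using p_tilde_strict_mono[of z x] psi_deriv_pos_iff[of z p] p x assms(3) by auto
  next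
    fix z assume "x < z" "z < A_k k"
    then show "psi_deriv p z < 0"
      using p_tilde_strict_mono[of x z] psi_deriv_neg_iff[of z p] p x assms(3) by auto
  qed (use x that in auto)
  then show "is_extremum_on {1/2..1} (psi k p) x"
    using x A_k_lt_1
    by (intro is_extremum_onI_max[where e = "min (x - 1/2) (A_k k - x)"]) auto
qed

end

theorem lemma4:
  fixes k :: nat
  assumes "k \<ge> 2"
  shows "(\<forall>p>1. is_extremum_on {1/2..1} (psi k p) (1/2) \<and> is_extremum_on {1/2..1} (psi k p) 1)
    \<and> (\<exists>!A. 1/2 < A \<and> A < 1 \<and> cot (pi * A) = - 1 / (pi * (real k - A)))
    \<and> (\<forall>p. p > pi\<^sup>2 * (real k - 1/2)\<^sup>2 - 1 \<longrightarrow>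
          (\<exists>x. 1/2 < x \<and> x < A_k k \<and> is_extremum_on {1/2..1} (psi k p) x))
    \<and> (\<forall>x. 1/2 < x \<and> x < A_k k \<longrightarrow>
          (\<forall>p>1. is_extremum_on {1/2..1} (psi k p) x \<longleftrightarrow> p = p_tilde k x)
          \<and> p_tilde k x > 1)"
  using psi_extremum_at_half[OF assms] psi_extremum_at_one[OF assms] A_k_unique[OF assms]
    psi_extremum_exists[OF assms] psi_extremum_iff_p_tilde[OF assms] p_tilde_gt_1[OF assms]
  by auto

end
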